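(* Let $\alpha\in(0,1)$ be irrational and let $w\in W_\alpha$. Then there exist $t\in\mathbb{N}$, a (possibly empty) suffix $x$ of $s_t$ or of $s_{t-1}$, and a (possibly empty) prefix $y$ of $s_{t+1}$ such that $w=xy$.
   Context: Let $\alpha=[a_1,a_2,\dots]$ be the continued fraction expansion of $\alpha$. Define words over $\{0,1\}$ by $s_{-1}=1$, $s_0=0$, $s_1=s_0^{a_1-1}s_{-1}$, $s_n=s_{n-1}^{a_n}s_{n-2}$ for $n\ge2$. For $\theta\in[0,1)$, $v_{\alpha,\theta}$ is the two-sided infinite word with letters $v_{\alpha,\theta}(n)=\chi_{[1-\alpha,1)}(n\alpha+\theta\bmod1)$, $n\in\mathbb{Z}$; $W_\alpha$ is the set of all finite non-empty subwords of the words $v_{\alpha,\theta}$, $\theta\in[0,1)$. $\mathbb{N}=\{1,2,\dots\}$. *)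

theory Defs
  imports Complex_Main "HOL-Library.Sublist"
begin

text \<open>Continued fraction expansion of \<alpha> \<in> (0,1): \<alpha> = [0; a_1, a_2, ...] = 1/(a_1 + 1/(a_2 + ...)).
  cf_rem \<alpha> n is the n-th iterate of the Gauss map, cf_rem \<alpha> 0 = \<alpha>;
  cf_pq \<alpha> k = a_k (k \<ge> 1).\<close>
fun cf_rem :: "real \<Rightarrow> nat \<Rightarrow> real" where
  "cf_rem \<alpha> 0 = \<alpha>"
| "cf_rem \<alpha> (Suc n) = frac (1 / cf_rem \<alpha> n)"

definition cf_pq :: "real \<Rightarrow> nat \<Rightarrow> nat" where
  "cf_pq \<alpha> k = nat \<lfloor>1 / cf_rem \<alpha> (k - 1)\<rfloor>"

text \<open>Standard words, index-shifted: sw \<alpha> (k+1) = s_k for k \<ge> -1.\<close>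
fun sw :: "real \<Rightarrow> nat \<Rightarrow> nat list" where
  "sw \<alpha> 0 = [1]"
| "sw \<alpha> (Suc 0) = [0]"
| "sw \<alpha> (Suc (Suc 0)) = concat (replicate (cf_pq \<alpha> 1 - 1) [0]) @ [1]"
| "sw \<alpha> (Suc (Suc (Suc n))) =
     concat (replicate (cf_pq \<alpha> (n + 2)) (sw \<alpha> (Suc (Suc n)))) @ sw \<alpha> (Suc n)"

definition sturm :: "real \<Rightarrow> real \<Rightarrow> int \<Rightarrow> nat" where
  "sturm \<alpha> \<theta> n = (if frac (of_int n * \<alpha> + \<theta>) \<in> {1 - \<alpha>..<1} then 1 else 0)"

definition Wset :: "real \<Rightarrow> nat list set" where
  "Wset \<alpha> = {w. w \<noteq> [] \<and> (\<exists>\<theta> m. 0 \<le> \<theta> \<and> \<theta> < 1 \<and>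
        w = map (\<lambda>i. sturm \<alpha> \<theta> (m + int i)) [0..<length w])}"

end

theory Submission
  imports Defs "HOL-Analysis.Kronecker_Approximation_Theorem"
begin

(* Let a = a_1 and let \<beta> = frac (1/\<alpha>) be the Gauss image of \<alpha>, with partial quotients
   a_2, a_3, ...  The characteristic word c_\<alpha>(k) = \<lfloor>(k+2)\<alpha>\<rfloor> - \<lfloor>(k+1)\<alpha>\<rfloor> is the image of c_\<beta>
   under the morphism 0 \<mapsto> 0^(a-1) 1, 1 \<mapsto> 0^(a-1) 1 0, and the standard words of \<alpha> are the
   images of those of \<beta>; so, by induction on n, every s_n is a prefix of c_\<alpha>.  The coding of
   the rotation by \<alpha> is right-continuous in the starting point and, by Kronecker's theorem, the
   orbit of 0 comes arbitrarily close to every point from the right; hence every factor of a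
   word v_{\<alpha>,\<theta>} is a factor of c_\<alpha>, and so of some s_N.  A factor of s_N = s_{N-1}^{a_N} s_{N-2}
   lies inside s_{N-1} or s_{N-2} (induction on N), or it crosses the end of a copy of s_{N-1};
   as s_{N-2} is a prefix of s_{N-1}, what follows that end is a prefix of s_N.  The only
   failure of this prefix property, s_0 = 0 against s_1 = 1 when a_1 = 1, is checked by hand. *)

lemma cf_rem_irrational:
  assumes "0 < \<alpha>" "\<alpha> < 1" "\<alpha> \<notin> \<rat>"
  shows "0 < cf_rem \<alpha> n \<and> cf_rem \<alpha> n < 1 \<and> cf_rem \<alpha> n \<notin> \<rat>"
proof (induction n)
  case (Suc n)
  then have "1 / cf_rem \<alpha> n \<notin> \<int>" using Ints_subset_Rats by (auto simp: divide_inverse)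
  then show ?case using Suc frac_lt_1 by (simp add: divide_inverse)
qed (use assms in simp)

lemma cf_pq_pos:
  assumes "0 < \<alpha>" "\<alpha> < 1" "\<alpha> \<notin> \<rat>"
  shows "0 < cf_pq \<alpha> (Suc k)"
proof -
  have "1 < 1 / cf_rem \<alpha> k" using cf_rem_irrational[OF assms, of k] by simp
  then show ?thesis unfolding cf_pq_def by simp
qed

lemma cf_rem_frac_inverse: "cf_rem (frac (1 / \<alpha>)) n = cf_rem \<alpha> (Suc n)"
  by (induction n) simp_all

lemma cf_pq_frac_inverse: "cf_pq (frac (1 / \<alpha>)) (Suc k) = cf_pq \<alpha> (k + 2)"
  by (simp add: cf_pq_def cf_rem_frac_inverse)

lemma inverse_eq_cf_pq_1_plus_frac:
  assumes "0 < \<alpha>"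
  shows "1 / \<alpha> = real (cf_pq \<alpha> 1) + frac (1 / \<alpha>)"
  using assms by (simp add: cf_pq_def frac_def)

section \<open>Standard words\<close>

lemma sw_2: "sw \<alpha> 2 = replicate (cf_pq \<alpha> 1 - 1) 0 @ [1]"
  by (simp add: numeral_2_eq_2)

lemma sw_add_3:
  "sw \<alpha> (n + 3) = concat (replicate (cf_pq \<alpha> (n + 2)) (sw \<alpha> (n + 2))) @ sw \<alpha> (n + 1)"
  by (simp add: numeral_3_eq_3 numeral_2_eq_2)

lemma sw_3: "sw \<alpha> 3 = concat (replicate (cf_pq \<alpha> 2) (sw \<alpha> 2)) @ [0]"
proof -
  have "sw \<alpha> 3 = concat (replicate (cf_pq \<alpha> 2) (sw \<alpha> 2)) @ sw \<alpha> 1"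
    using sw_add_3[of \<alpha> 0] by (simp only: add_0_left)
  then show ?thesis by (simp only: One_nat_def sw.simps(2))
qed

declare sw.simps(3,4) [simp del]

lemma sw_neq_Nil: "sw \<alpha> n \<noteq> []"
  by (induction \<alpha> n rule: sw.induct) (simp_all add: sw.simps)

lemma length_sw:
  assumes "\<And>k. 0 < cf_pq \<alpha> (k + 2)"
  shows "n + 1 \<le> length (sw \<alpha> (n + 2))"
proof (induction n)
  case (Suc n)
  have "length (sw \<alpha> (n + 2)) + length (sw \<alpha> (n + 1)) \<le> length (sw \<alpha> (n + 3))"
    using assms[of n] unfolding sw_add_3 by (cases "cf_pq \<alpha> (n + 2)") simp_all
  moreover have "0 < length (sw \<alpha> (n + 1))"
    using sw_neq_Nil by blast
  ultimately have "Suc n + 1 \<le> length (sw \<alpha> (n + 3))"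
    using Suc.IH by linarith
  then show ?case by (simp add: numeral_3_eq_3)
qed (simp add: sw.simps)

lemma prefix_sw_Suc:
  assumes "\<And>k. 0 < cf_pq \<alpha> (k + 2)" "n \<noteq> 0 \<or> 2 \<le> cf_pq \<alpha> 1"
  shows "prefix (sw \<alpha> (n + 1)) (sw \<alpha> (n + 2))"
proof (cases n)
  case 0
  then show ?thesis using assms(2) by (cases "cf_pq \<alpha> 1 - 1") (auto simp: sw.simps)
next
  case (Suc k)
  have "sw \<alpha> (n + 2) = concat (replicate (cf_pq \<alpha> (k + 2)) (sw \<alpha> (k + 2))) @ sw \<alpha> (k + 1)"
    using Suc by (simp add: sw.simps(4))
  then show ?thesis using assms(1)[of k] Suc by (cases "cf_pq \<alpha> (k + 2)") auto
qed

section \<open>Factors of standard words\<close>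

definition standard_split :: "real \<Rightarrow> nat list \<Rightarrow> bool" where
  "standard_split \<alpha> w \<longleftrightarrow>
     (\<exists>t::nat. t \<ge> 1 \<and> (\<exists>x y. (suffix x (sw \<alpha> (t + 1)) \<or> suffix x (sw \<alpha> t))
       \<and> prefix y (sw \<alpha> (t + 2)) \<and> w = x @ y))"

lemma standard_split_append:
  assumes "1 \<le> t" "suffix x (sw \<alpha> (t + 1))" "prefix y (sw \<alpha> (t + 2))"
  shows "standard_split \<alpha> (x @ y)"
  unfolding standard_split_def using assms by blast

lemma standard_split_suffix:
  assumes "1 \<le> t" "suffix w (sw \<alpha> t)"
  shows "standard_split \<alpha> w"
  unfolding standard_split_def using assms by (metis Nil_prefix append.right_neutral)

lemma standard_split_prefix:
  assumes "1 \<le> t" "prefix w (sw \<alpha> (t + 2))"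
  shows "standard_split \<alpha> w"
  using standard_split_append[OF assms(1) _ assms(2), of "[]"] by simp

lemma sublist_power_append:
  assumes "prefix v u" "sublist w (concat (replicate k u) @ v)"
  shows "sublist w u \<or> sublist w v \<or>
    (\<exists>x y. w = x @ y \<and> suffix x u \<and> prefix y (concat (replicate k u) @ v))"
  using assms(2)
proof (induction k)
  case (Suc k)
  have "prefix (concat (replicate k u) @ v) (concat (replicate k u) @ u)"
    using assms(1) by simp
  then have grow: "prefix (concat (replicate k u) @ v) (concat (replicate (Suc k) u) @ v)"
    by (simp add: replicate_append_same[symmetric])
  from Suc.prems have "sublist w u \<or> sublist w (concat (replicate k u) @ v) \<or>
      (\<exists>x y. w = x @ y \<and> suffix x u \<and> prefix y (concat (replicate k u) @ v))"
    by (simp add: sublist_append)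
  then show ?case
    using Suc.IH grow prefix_order.trans by blast
qed simp

lemma sublist_replicate_snoc:
  assumes "sublist w (replicate k c @ [d])"
  shows "prefix w (replicate k c @ [d]) \<or> suffix w (replicate k c @ [d])"
proof -
  from assms consider "suffix w (replicate k c @ [d])" | "sublist w (replicate k c)"
    by (auto simp: sublist_snoc)
  then show ?thesis
  proof cases
    case 2
    then have "w = replicate (length w) c" "length w \<le> k"
      using set_mono_sublist sublist_length_le by (fastforce intro: replicate_eqI)+
    then have "replicate k c @ [d] = w @ replicate (k - length w) c @ [d]"
      by (metis append_assoc le_add_diff_inverse replicate_add)
    then show ?thesis by (metis prefixI)
  qed simp
qed

lemma standard_split_sublist_sw_le_2:
  assumes "0 < cf_pq \<alpha> 2" "N \<le> 2" "sublist w (sw \<alpha> N)"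
  shows "standard_split \<alpha> w"
proof -
  consider "N = 0" | "N = 1" | "N = 2" using assms(2) by linarith
  then show ?thesis
  proof cases
    case 1
    then have "suffix w [1]" using assms(3) sublist_snoc[of w "[]"] by auto
    moreover have "suffix [1] (sw \<alpha> 2)" by (simp add: sw_2)
    ultimately show ?thesis by (meson standard_split_suffix suffix_order.trans one_le_numeral)
  next
    case 2
    then have "suffix w (sw \<alpha> 1)" using assms(3) sublist_snoc[of w "[]"] by auto
    then show ?thesis by (rule standard_split_suffix[OF order_refl])
  next
    case 3
    then have "prefix w (sw \<alpha> 2) \<or> suffix w (sw \<alpha> 2)"
      using assms(3) sublist_replicate_snoc by (simp add: sw_2)
    moreover have "prefix (sw \<alpha> 2) (sw \<alpha> 3)"
      using assms(1) by (cases "cf_pq \<alpha> 2") (auto simp: sw_3)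
    ultimately consider "prefix w (sw \<alpha> 3)" | "suffix w (sw \<alpha> 2)"
      using prefix_order.trans by blast
    then show ?thesis
      using standard_split_prefix[of 1 w \<alpha>] standard_split_suffix[of 2 w \<alpha>]
      by cases (simp_all add: numeral_3_eq_3 numeral_2_eq_2)
  qed
qed

lemma standard_split_sublist_sw_3:
  assumes "cf_pq \<alpha> 1 \<le> 1" "sublist w (sw \<alpha> 3)"
  shows "standard_split \<alpha> w"
proof -
  have "sw \<alpha> 3 = replicate (cf_pq \<alpha> 2) 1 @ [0]"
    using assms(1) by (simp add: sw_3 sw_2)
  then have "prefix w (sw \<alpha> 3) \<or> suffix w (sw \<alpha> 3)"
    using assms(2) sublist_replicate_snoc by metis
  then show ?thesis
    using standard_split_prefix[of 1 w \<alpha>] standard_split_suffix[of 3 w \<alpha>]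
    by (auto simp: numeral_3_eq_3)
qed

lemma sublist_sw_standard_split:
  assumes pos: "\<And>k. 0 < cf_pq \<alpha> (k + 2)" and "sublist w (sw \<alpha> N)"
  shows "standard_split \<alpha> w"
  using assms(2)
proof (induction N arbitrary: w rule: less_induct)
  case (less N)
  show ?case
  proof (cases "N \<le> 2")
    case True
    then show ?thesis
      using standard_split_sublist_sw_le_2[OF pos[of 0, unfolded add_0_left]] less.prems by blast
  next
    case False
    then have "\<exists>n. N = n + 3" by presburger
    then obtain n where N: "N = n + 3" ..
    show ?thesis
    proof (cases "n = 0 \<and> cf_pq \<alpha> 1 \<le> 1")
      case True
      then show ?thesis using standard_split_sublist_sw_3 less.prems N by simp
    next
      case False
      then have "prefix (sw \<alpha> (n + 1)) (sw \<alpha> (n + 2))"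
        by (intro prefix_sw_Suc pos) auto
      from sublist_power_append[OF this] less.prems[unfolded N sw_add_3]
      consider "sublist w (sw \<alpha> (n + 2))" | "sublist w (sw \<alpha> (n + 1))"
        | x y where "w = x @ y" "suffix x (sw \<alpha> (n + 2))" "prefix y (sw \<alpha> (n + 3))"
        unfolding sw_add_3 by blast
      then show ?thesis
      proof cases
        case 1
        then show ?thesis using less.IH[of "n + 2"] N by simp
      next
        case 2
        then show ?thesis using less.IH[of "n + 1"] N by simp
      next
        case 3
        then show ?thesis
          using standard_split_append[of "n + 1" x \<alpha> y] by (simp add: numeral_3_eq_3)
      qed
    qed
  qed
qed

section \<open>Standard words of the Gauss image\<close>

definition sturm_block :: "nat \<Rightarrow> nat \<Rightarrow> nat list" where
  "sturm_block a x = replicate (a - 1) 0 @ [1] @ (if x = 0 then [] else [0])"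

definition sturm_morphism :: "nat \<Rightarrow> nat list \<Rightarrow> nat list" where
  "sturm_morphism a xs = concat (map (sturm_block a) xs)"

lemma sturm_morphism_simps [simp]:
  "sturm_morphism a [] = []"
  "sturm_morphism a [x] = sturm_block a x"
  "sturm_morphism a (xs @ ys) = sturm_morphism a xs @ sturm_morphism a ys"
  "sturm_morphism a (replicate k x) = concat (replicate k (sturm_block a x))"
  "sturm_morphism a (concat (replicate k xs)) = concat (replicate k (sturm_morphism a xs))"
  by (induction k) (simp_all add: sturm_morphism_def)

lemma sw_eq_sturm_morphism:
  assumes "0 < cf_pq \<alpha> 2"
  shows "sw \<alpha> (n + 2) = sturm_morphism (cf_pq \<alpha> 1) (sw (frac (1 / \<alpha>)) (n + 1))"
proof (induction n rule: less_induct)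
  case (less n)
  let ?\<beta> = "frac (1 / \<alpha>)" and ?a = "cf_pq \<alpha> 1"
  have "n = 0 \<or> n = 1 \<or> (\<exists>k. n = k + 2)" by presburger
  then consider "n = 0" | "n = 1" | k where "n = k + 2" by blast
  then show ?case
  proof cases
    case 1
    then show ?thesis by (simp add: sw.simps(3) sturm_block_def)
  next
    case 2
    obtain c where c: "cf_pq \<alpha> 2 = Suc c" using assms by (metis gr0_implies_Suc)
    have "cf_pq ?\<beta> 1 = cf_pq \<alpha> 2"
      using cf_pq_frac_inverse[of \<alpha> 0] by (simp add: numeral_2_eq_2)
    then have "sturm_morphism ?a (sw ?\<beta> 2) = concat (replicate c (sturm_block ?a 0)) @ sturm_block ?a 1"
      using c by (simp add: sw_2)
    also have "\<dots> = concat (replicate (cf_pq \<alpha> 2) (sw \<alpha> 2)) @ sw \<alpha> 1"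
      unfolding c by (simp add: sw_2 sturm_block_def replicate_append_same[symmetric])
    also have "\<dots> = sw \<alpha> 3"
      by (simp add: sw_3)
    finally show ?thesis using 2 by (simp add: numeral_3_eq_3 numeral_2_eq_2)
  next
    case (3 k)
    then show ?thesis
      using less.IH[of "k + 1"] less.IH[of k] cf_pq_frac_inverse[of \<alpha> "k + 1"]
      by (simp add: sw.simps(4))
  qed
qed

section \<open>The characteristic word\<close>

lemma floor_mult_eqI:
  fixes n :: int
  assumes "0 < \<alpha>" "of_int n / \<alpha> \<le> x" "x < (of_int n + 1) / \<alpha>"
  shows "\<lfloor>x * \<alpha>\<rfloor> = n"
  using assms by (simp add: floor_eq_iff pos_divide_le_eq pos_less_divide_eq)

definition char_word :: "real \<Rightarrow> nat \<Rightarrow> nat" where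
  "char_word \<alpha> k = nat (\<lfloor>(real k + 2) * \<alpha>\<rfloor> - \<lfloor>(real k + 1) * \<alpha>\<rfloor>)"

(* Position in c_\<alpha> of the block that is the image of the letter c_\<beta>(m), \<beta> = frac (1/\<alpha>). *)
definition block_start :: "real \<Rightarrow> nat \<Rightarrow> nat" where
  "block_start \<alpha> m = cf_pq \<alpha> 1 * m + nat \<lfloor>(real m + 1) * frac (1 / \<alpha>)\<rfloor>"

lemma int_char_word:
  assumes "0 \<le> \<alpha>"
  shows "int (char_word \<alpha> k) = \<lfloor>(real k + 2) * \<alpha>\<rfloor> - \<lfloor>(real k + 1) * \<alpha>\<rfloor>"
proof -
  have "\<lfloor>(real k + 1) * \<alpha>\<rfloor> \<le> \<lfloor>(real k + 2) * \<alpha>\<rfloor>"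
    using assms by (intro floor_mono mult_right_mono) auto
  then show ?thesis unfolding char_word_def by simp
qed

lemma char_word_le_1:
  assumes "0 \<le> \<alpha>" "\<alpha> \<le> 1"
  shows "char_word \<alpha> k \<le> 1"
proof -
  have "(real k + 2) * \<alpha> \<le> (real k + 1) * \<alpha> + 1"
    using assms by (simp add: algebra_simps)
  then have "\<lfloor>(real k + 2) * \<alpha>\<rfloor> \<le> \<lfloor>(real k + 1) * \<alpha>\<rfloor> + 1"
    by (metis floor_add_int floor_mono of_int_1)
  then show ?thesis using int_char_word[OF assms(1), of k] by linarith
qed

lemma block_start_0 [simp]: "block_start \<alpha> 0 = 0"
  by (simp add: block_start_def floor_eq_iff frac_lt_1)

lemma int_block_start:
  assumes "0 < \<alpha>"
  shows "int (block_start \<alpha> m) + int (cf_pq \<alpha> 1) = \<lfloor>(real m + 1) / \<alpha>\<rfloor>"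
proof -
  have "(real m + 1) / \<alpha> = (real m + 1) * (real (cf_pq \<alpha> 1) + frac (1 / \<alpha>))"
    using inverse_eq_cf_pq_1_plus_frac[OF assms] by (metis times_divide_eq_right mult.right_neutral)
  then have "(real m + 1) / \<alpha> = of_int (int (cf_pq \<alpha> 1) * (int m + 1)) + (real m + 1) * frac (1 / \<alpha>)"
    by (simp add: algebra_simps)
  then have "\<lfloor>(real m + 1) / \<alpha>\<rfloor> = int (cf_pq \<alpha> 1) * (int m + 1) + \<lfloor>(real m + 1) * frac (1 / \<alpha>)\<rfloor>"
    by (simp only: int_add_floor)
  then show ?thesis unfolding block_start_def by (simp add: algebra_simps)
qed

lemma block_start_Suc:
  assumes "0 < \<alpha>"
  shows "block_start \<alpha> (Suc m) = block_start \<alpha> m + cf_pq \<alpha> 1 + char_word (frac (1 / \<alpha>)) m"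
proof -
  have "int (block_start \<alpha> (Suc m)) = int (block_start \<alpha> m + cf_pq \<alpha> 1 + char_word (frac (1 / \<alpha>)) m)"
    using int_char_word[of "frac (1 / \<alpha>)" m] by (simp add: block_start_def algebra_simps)
  then show ?thesis by linarith
qed

context
  fixes \<alpha> :: real
  assumes \<alpha>: "0 < \<alpha>" "\<alpha> < 1" "\<alpha> \<notin> \<rat>"
begin

lemma floor_succ_div_less: "of_int \<lfloor>(real m + 1) / \<alpha>\<rfloor> < (real m + 1) / \<alpha>"
proof -
  have "(real m + 1) / \<alpha> \<notin> \<rat>"
  proof
    assume q: "(real m + 1) / \<alpha> \<in> \<rat>"
    have "\<alpha> = (real m + 1) / ((real m + 1) / \<alpha>)" using \<alpha>(1) by simp
    also have "\<dots> \<in> \<rat>" by (rule Rats_divide[OF _ q]) simp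
    finally show False using \<alpha>(3) by contradiction
  qed
  then have "0 < frac ((real m + 1) / \<alpha>)" using Ints_subset_Rats by auto
  then show ?thesis by (simp add: frac_def)
qed

lemma floor_mult_in_block:
  fixes K :: int
  assumes "\<lfloor>(real m + 1) / \<alpha>\<rfloor> - int (cf_pq \<alpha> 1) < K" "K \<le> \<lfloor>(real m + 1) / \<alpha>\<rfloor>"
  shows "\<lfloor>of_int K * \<alpha>\<rfloor> = int m"
proof (rule floor_mult_eqI[OF \<alpha>(1)])
  have "real (cf_pq \<alpha> 1) \<le> 1 / \<alpha>"
    using inverse_eq_cf_pq_1_plus_frac[OF \<alpha>(1)] frac_ge_0[of "1 / \<alpha>"] by linarith
  moreover have "(real m + 1) / \<alpha> - 1 < of_int \<lfloor>(real m + 1) / \<alpha>\<rfloor>"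
    by linarith
  moreover have "of_int \<lfloor>(real m + 1) / \<alpha>\<rfloor> + 1 - real (cf_pq \<alpha> 1) \<le> (of_int K :: real)"
    using assms(1) by linarith
  moreover have "(real m + 1) / \<alpha> = real m / \<alpha> + 1 / \<alpha>"
    by (simp add: add_divide_distrib)
  ultimately have "real m / \<alpha> \<le> of_int K"
    by linarith
  then show "real_of_int (int m) / \<alpha> \<le> of_int K"
    by simp
  show "of_int K < (real_of_int (int m) + 1) / \<alpha>"
    using assms(2) floor_succ_div_less[of m] by simp
qed

lemma floor_mult_after_block: "\<lfloor>(of_int \<lfloor>(real m + 1) / \<alpha>\<rfloor> + 1) * \<alpha>\<rfloor> = int m + 1"
proof (rule floor_mult_eqI[OF \<alpha>(1)])
  show "real_of_int (int m + 1) / \<alpha> \<le> of_int \<lfloor>(real m + 1) / \<alpha>\<rfloor> + 1"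
    by simp
  have "1 < 1 / \<alpha>" using \<alpha> by simp
  moreover have "(real_of_int (int m + 1) + 1) / \<alpha> = (real m + 1) / \<alpha> + 1 / \<alpha>"
    by (simp add: add_divide_distrib)
  ultimately show "of_int \<lfloor>(real m + 1) / \<alpha>\<rfloor> + 1 < (real_of_int (int m + 1) + 1) / \<alpha>"
    using floor_succ_div_less[of m] by linarith
qed

lemma char_word_in_block:
  assumes "i < cf_pq \<alpha> 1"
  shows "char_word \<alpha> (block_start \<alpha> m + i) = (if i = cf_pq \<alpha> 1 - 1 then 1 else 0)"
proof -
  define N where "N = \<lfloor>(real m + 1) / \<alpha>\<rfloor>"
  have "int (block_start \<alpha> m + i) = N - int (cf_pq \<alpha> 1) + int i"
    using int_block_start[OF \<alpha>(1), of m] unfolding N_def by simp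
  then have pos: "real (block_start \<alpha> m + i) = of_int (N - int (cf_pq \<alpha> 1) + int i)"
    by (metis of_int_of_nat_eq)
  have lower: "\<lfloor>(real (block_start \<alpha> m + i) + 1) * \<alpha>\<rfloor> = int m"
    using floor_mult_in_block[of m "N - int (cf_pq \<alpha> 1) + int i + 1"] assms
    unfolding pos N_def by simp
  show ?thesis
  proof (cases "i = cf_pq \<alpha> 1 - 1")
    case True
    then have "real (block_start \<alpha> m + i) + 2 = of_int N + 1"
      using pos assms by simp
    then have "\<lfloor>(real (block_start \<alpha> m + i) + 2) * \<alpha>\<rfloor> = int m + 1"
      unfolding N_def by (simp only: floor_mult_after_block)
    then show ?thesis using lower True unfolding char_word_def by simp
  next
    case False
    then have "\<lfloor>(real (block_start \<alpha> m + i) + 2) * \<alpha>\<rfloor> = int m"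
      using floor_mult_in_block[of m "N - int (cf_pq \<alpha> 1) + int i + 2"] assms
      unfolding pos N_def by simp
    then show ?thesis using lower False unfolding char_word_def by simp
  qed
qed

lemma char_word_after_block:
  assumes "char_word (frac (1 / \<alpha>)) m = 1"
  shows "char_word \<alpha> (block_start \<alpha> m + cf_pq \<alpha> 1) = 0"
proof -
  define N where "N = \<lfloor>(real m + 1) / \<alpha>\<rfloor>"
  have "int (block_start \<alpha> m + cf_pq \<alpha> 1) = N"
    using int_block_start[OF \<alpha>(1), of m] unfolding N_def by simp
  then have pos: "real (block_start \<alpha> m + cf_pq \<alpha> 1) = of_int N"
    by (metis of_int_of_nat_eq)
  have next_block: "\<lfloor>(real (Suc m) + 1) / \<alpha>\<rfloor> = N + int (cf_pq \<alpha> 1) + 1"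
    using int_block_start[OF \<alpha>(1), of "Suc m"] int_block_start[OF \<alpha>(1), of m]
      block_start_Suc[OF \<alpha>(1), of m] assms unfolding N_def by simp
  have "\<lfloor>(real (block_start \<alpha> m + cf_pq \<alpha> 1) + 1) * \<alpha>\<rfloor> = int m + 1"
    using floor_mult_after_block[of m] unfolding pos N_def by simp
  moreover have "\<lfloor>(real (block_start \<alpha> m + cf_pq \<alpha> 1) + 2) * \<alpha>\<rfloor> = int m + 1"
    using floor_mult_in_block[of "Suc m" "N + 2"] cf_pq_pos[OF \<alpha>, of 0]
    unfolding pos next_block by simp
  ultimately show ?thesis unfolding char_word_def by simp
qed

lemma map_char_word_block_body:
  "map (char_word \<alpha>) [block_start \<alpha> m..<block_start \<alpha> m + cf_pq \<alpha> 1]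
     = replicate (cf_pq \<alpha> 1 - 1) 0 @ [1]"
proof (rule nth_equalityI)
  show "length (map (char_word \<alpha>) [block_start \<alpha> m..<block_start \<alpha> m + cf_pq \<alpha> 1])
      = length (replicate (cf_pq \<alpha> 1 - 1) 0 @ [1 :: nat])"
    using cf_pq_pos[OF \<alpha>, of 0] by simp
  fix i assume "i < length (map (char_word \<alpha>) [block_start \<alpha> m..<block_start \<alpha> m + cf_pq \<alpha> 1])"
  then show "map (char_word \<alpha>) [block_start \<alpha> m..<block_start \<alpha> m + cf_pq \<alpha> 1] ! i
      = (replicate (cf_pq \<alpha> 1 - 1) 0 @ [1]) ! i"
    using char_word_in_block[of i m] by (auto simp: nth_append)
qed

lemma map_char_word_block:
  "map (char_word \<alpha>) [block_start \<alpha> m..<block_start \<alpha> (Suc m)]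
     = sturm_block (cf_pq \<alpha> 1) (char_word (frac (1 / \<alpha>)) m)"
proof -
  let ?s = "block_start \<alpha> m" and ?a = "cf_pq \<alpha> 1" and ?x = "char_word (frac (1 / \<alpha>)) m"
  have "[?s..<block_start \<alpha> (Suc m)] = [?s..<?s + ?a] @ [?s + ?a..<?s + ?a + ?x]"
    using block_start_Suc[OF \<alpha>(1), of m] upt_add_eq_append[of ?s "?s + ?a" ?x] by simp
  moreover have "?x \<le> 1"
    by (rule char_word_le_1) (simp_all add: less_imp_le[OF frac_lt_1])
  ultimately show ?thesis
    using map_char_word_block_body[of m] char_word_after_block[of m]
    by (cases ?x) (auto simp: sturm_block_def)
qed

lemma sturm_morphism_char_word:
  "sturm_morphism (cf_pq \<alpha> 1) (map (char_word (frac (1 / \<alpha>))) [0..<m])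
     = map (char_word \<alpha>) [0..<block_start \<alpha> m]"
proof (induction m)
  case (Suc m)
  have "block_start \<alpha> m \<le> block_start \<alpha> (Suc m)"
    using block_start_Suc[OF \<alpha>(1), of m] by simp
  then have "[0..<block_start \<alpha> (Suc m)] = [0..<block_start \<alpha> m] @ [block_start \<alpha> m..<block_start \<alpha> (Suc m)]"
    using upt_add_eq_append[of 0 "block_start \<alpha> m"] by (metis le_add_diff_inverse zero_le)
  then show ?case using Suc map_char_word_block[of m] by simp
qed simp

end

lemma sw_eq_map_char_word:
  assumes "0 < \<alpha>" "\<alpha> < 1" "\<alpha> \<notin> \<rat>"
  shows "sw \<alpha> (n + 2) = map (char_word \<alpha>) [0..<length (sw \<alpha> (n + 2))]"
  using assms
proof (induction n arbitrary: \<alpha>)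
  case 0
  have "sw \<alpha> 2 = map (char_word \<alpha>) [0..<0 + cf_pq \<alpha> 1]"
    using map_char_word_block_body[OF "0.prems", of 0] by (simp add: sw_2)
  moreover have "length (sw \<alpha> 2) = cf_pq \<alpha> 1"
    using cf_pq_pos[OF "0.prems", of 0] by (simp add: sw_2)
  ultimately show ?case unfolding add_0_left by simp
next
  case (Suc n)
  define \<beta> where "\<beta> = frac (1 / \<alpha>)"
  have \<beta>: "0 < \<beta>" "\<beta> < 1" "\<beta> \<notin> \<rat>"
    using cf_rem_irrational[OF Suc.prems, of 1] unfolding \<beta>_def by simp_all
  have "0 < cf_pq \<alpha> 2"
    using cf_pq_pos[OF Suc.prems, of 1] by (simp add: numeral_2_eq_2)
  then have "sw \<alpha> (Suc n + 2) = sturm_morphism (cf_pq \<alpha> 1) (sw \<beta> (n + 2))"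
    using sw_eq_sturm_morphism[of \<alpha> "Suc n"] unfolding \<beta>_def by simp
  also have "\<dots> = sturm_morphism (cf_pq \<alpha> 1) (map (char_word \<beta>) [0..<length (sw \<beta> (n + 2))])"
    by (rule arg_cong[OF Suc.IH[OF \<beta>]])
  also have "\<dots> = map (char_word \<alpha>) [0..<block_start \<alpha> (length (sw \<beta> (n + 2)))]"
    unfolding \<beta>_def by (rule sturm_morphism_char_word[OF Suc.prems])
  finally show ?case by simp
qed

section \<open>Factors of Sturmian words\<close>

lemma floor_add_minus_floor:
  assumes "0 \<le> \<alpha>" "\<alpha> \<le> 1"
  shows "\<lfloor>y + \<alpha>\<rfloor> - \<lfloor>y\<rfloor> = (if frac y \<in> {1 - \<alpha>..<1} then 1 else 0)"
proof -
  have "\<lfloor>y + \<alpha>\<rfloor> = \<lfloor>frac y + \<alpha>\<rfloor> + \<lfloor>y\<rfloor>"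
    by (simp add: frac_def floor_add_int)
  moreover have "\<lfloor>frac y + \<alpha>\<rfloor> = (if 1 - \<alpha> \<le> frac y then 1 else 0)"
    using assms frac_ge_0[of y] frac_lt_1[of y] by (simp add: floor_eq_iff)
  ultimately show ?thesis using frac_lt_1[of y] by simp
qed

lemma char_word_eq_sturm:
  assumes "0 \<le> \<alpha>" "\<alpha> \<le> 1"
  shows "char_word \<alpha> k = sturm \<alpha> 0 (int k + 1)"
proof -
  have "(real k + 2) * \<alpha> = (real k + 1) * \<alpha> + \<alpha>" by (simp add: algebra_simps)
  then show ?thesis
    using floor_add_minus_floor[OF assms, of "(real k + 1) * \<alpha>"]
    by (simp add: char_word_def sturm_def)
qed

lemma sturm_add: "sturm \<alpha> \<theta> (m + n) = sturm \<alpha> (frac (of_int m * \<alpha> + \<theta>)) n"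
proof -
  have "of_int n * \<alpha> + frac (of_int m * \<alpha> + \<theta>)
      = of_int (m + n) * \<alpha> + \<theta> + of_int (- \<lfloor>of_int m * \<alpha> + \<theta>\<rfloor>)"
    by (simp add: frac_def algebra_simps)
  then show ?thesis unfolding sturm_def by (simp only: frac_add_of_int_right)
qed

lemma sturm_eventually_at_right:
  assumes "0 \<le> \<alpha>"
  shows "\<forall>\<^sub>F \<sigma> in at_right \<theta>. sturm \<alpha> \<sigma> n = sturm \<alpha> \<theta> n"
proof -
  define f where "f = frac (of_int n * \<alpha> + \<theta>)"
  define e where "e = (if 1 - \<alpha> \<le> f then 1 - f else 1 - \<alpha> - f)"
  have f: "0 \<le> f" "f < 1" unfolding f_def by (simp_all add: frac_lt_1)
  have "sturm \<alpha> \<sigma> n = sturm \<alpha> \<theta> n" if "\<sigma> \<in> {\<theta><..<\<theta> + e}" for \<sigma>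
  proof -
    have "f + (\<sigma> - \<theta>) < 1" using that assms f unfolding e_def by (auto split: if_splits)
    moreover have "of_int n * \<alpha> + \<sigma> - (f + (\<sigma> - \<theta>)) \<in> \<int>"
      unfolding f_def frac_def by simp
    ultimately have "frac (of_int n * \<alpha> + \<sigma>) = f + (\<sigma> - \<theta>)"
      using that f by (simp add: frac_unique_iff)
    then show ?thesis using that unfolding sturm_def f_def[symmetric] e_def by (auto split: if_splits)
  qed
  moreover have "0 < e" using f unfolding e_def by auto
  ultimately show ?thesis
    using eventually_at_right_real[of \<theta> "\<theta> + e"] by (auto elim: eventually_mono)
qed

lemma exists_frac_mult_between:
  assumes "x \<notin> \<rat>" "0 \<le> a" "a < b" "a < 1"
  obtains k :: nat where "0 < k" "a < frac (real k * x)" "frac (real k * x) < b"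
proof -
  define r where "r = (min b 1 - a) / 2"
  have "2 * r = min b 1 - a" unfolding r_def by simp
  then have "0 < r" "0 \<le> a + r" "a + r \<le> 1" "a + 2 * r \<le> b"
    using assms by (auto simp: min_def split: if_splits)
  moreover obtain k where "0 < k" "\<bar>frac (real k * x) - (a + r)\<bar> < r"
    using Kronecker_approx_1_explicit[OF assms(1)] calculation(1-3) by metis
  ultimately show thesis using that by (simp add: abs_less_iff)
qed

lemma Wset_obtain_sturm_prefix:
  assumes "w \<in> Wset \<alpha>"
  obtains \<rho> where "0 \<le> \<rho>" "\<rho> < 1" "w = map (\<lambda>i. sturm \<alpha> \<rho> (int i)) [0..<length w]"
proof -
  obtain \<theta> m where "w = map (\<lambda>i. sturm \<alpha> \<theta> (m + int i)) [0..<length w]"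
    using assms unfolding Wset_def by blast
  then have "w = map (\<lambda>i. sturm \<alpha> (frac (of_int m * \<alpha> + \<theta>)) (int i)) [0..<length w]"
    by (simp only: sturm_add)
  then show thesis by (rule that[OF frac_ge_0 frac_lt_1])
qed

lemma Wset_imp_char_word_factor:
  assumes "0 < \<alpha>" "\<alpha> < 1" "\<alpha> \<notin> \<rat>" "w \<in> Wset \<alpha>"
  obtains k where "w = map (char_word \<alpha>) [k..<k + length w]"
proof -
  obtain \<rho> where \<rho>: "0 \<le> \<rho>" "\<rho> < 1" and w: "w = map (\<lambda>i. sturm \<alpha> \<rho> (int i)) [0..<length w]"
    using Wset_obtain_sturm_prefix[OF assms(4)] .
  have "\<forall>\<^sub>F \<sigma> in at_right \<rho>. \<forall>i\<in>{..<length w}. sturm \<alpha> \<sigma> (int i) = sturm \<alpha> \<rho> (int i)"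
    using sturm_eventually_at_right assms(1) by (intro eventually_ball_finite) auto
  then obtain b where "\<rho> < b"
    and b: "\<And>\<sigma> i. \<rho> < \<sigma> \<Longrightarrow> \<sigma> < b \<Longrightarrow> i < length w \<Longrightarrow>
              sturm \<alpha> \<sigma> (int i) = sturm \<alpha> \<rho> (int i)"
    unfolding eventually_at_right_field by auto
  obtain k :: nat where k: "0 < k" "\<rho> < frac (real k * \<alpha>)" "frac (real k * \<alpha>) < b"
    using exists_frac_mult_between[OF assms(3) \<rho>(1) \<open>\<rho> < b\<close> \<rho>(2)] by blast
  have "sturm \<alpha> \<rho> (int i) = char_word \<alpha> (k - 1 + i)" if "i < length w" for i
  proof -
    have "sturm \<alpha> \<rho> (int i) = sturm \<alpha> 0 (int k + int i)"
      using b[OF k(2,3) that] sturm_add[of \<alpha> 0 "int k" "int i"] by simp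
    also have "\<dots> = char_word \<alpha> (k - 1 + i)"
      using char_word_eq_sturm[of \<alpha> "k - 1 + i"] assms(1,2) k(1) by simp
    finally show ?thesis .
  qed
  then have "w = map (\<lambda>i. char_word \<alpha> (k - 1 + i)) [0..<length w]"
    by (subst w) simp
  also have "\<dots> = map (char_word \<alpha>) [k - 1..<k - 1 + length w]"
    by (rule nth_equalityI) simp_all
  finally show thesis by (rule that)
qed

lemma sublist_map_upt:
  assumes "k + l \<le> n"
  shows "sublist (map f [k..<k + l]) (map f [0..<n])"
proof -
  have "[0..<n] = [0..<k + l] @ [k + l..<n]"
    using upt_add_eq_append[of 0 "k + l" "n - (k + l)"] assms by simp
  also have "[0..<k + l] = [0..<k] @ [k..<k + l]"
    using upt_add_eq_append[of 0 k l] by simp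
  finally show ?thesis by (simp add: sublist_def) blast
qed

lemma Wset_sublist_sw:
  assumes "0 < \<alpha>" "\<alpha> < 1" "\<alpha> \<notin> \<rat>" "w \<in> Wset \<alpha>"
  obtains N where "sublist w (sw \<alpha> N)"
proof -
  obtain k where k: "w = map (char_word \<alpha>) [k..<k + length w]"
    using Wset_imp_char_word_factor[OF assms] by blast
  define N where "N = k + length w + 2"
  have "sw \<alpha> N = map (char_word \<alpha>) [0..<length (sw \<alpha> N)]"
    unfolding N_def by (rule sw_eq_map_char_word[OF assms(1-3)])
  moreover have "k + length w \<le> length (sw \<alpha> N)"
    using length_sw[of \<alpha> "k + length w"] cf_pq_pos[OF assms(1-3)] unfolding N_def by simp
  ultimately have "sublist w (sw \<alpha> N)"
    using sublist_map_upt k by metis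
  then show thesis by (rule that)
qed

theorem lemma2:
  fixes \<alpha> :: real and w :: "nat list"
  assumes "0 < \<alpha>" and "\<alpha> < 1" and "\<alpha> \<notin> \<rat>" and "w \<in> Wset \<alpha>"
  shows "\<exists>t::nat. t \<ge> 1 \<and> (\<exists>x y. (suffix x (sw \<alpha> (t + 1)) \<or> suffix x (sw \<alpha> t))
           \<and> prefix y (sw \<alpha> (t + 2)) \<and> w = x @ y)"
proof -
  obtain N where "sublist w (sw \<alpha> N)"
    using Wset_sublist_sw[OF assms] .
  moreover have "\<And>k. 0 < cf_pq \<alpha> (k + 2)"
    using cf_pq_pos[OF assms(1-3)] by simp
  ultimately show ?thesis
    using sublist_sw_standard_split unfolding standard_split_def by blast
qed

end
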